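(* If $\mathbb S[\boldsymbol\kappa]$ is an unstable-negative feedback, then $\mathbb S[\boldsymbol\kappa]$ is a Hurwitz-unstable $P^-_0$ matrix.
   Context: For a reaction network with reactant coefficients $s^j_m$ and stoichiometric matrix $\mathbb S$, a $k$-Child-Selection $\boldsymbol\kappa=(\kappa,E_\kappa,J)$ is a bijection $J:\kappa\to E_\kappa$ between $k$ species and $k$ reactions with $s^{J(m)}_m>0$; its CS-matrix is $\mathbb S[\boldsymbol\kappa]_{ml}=\mathbb S_{m,J(l)}$. Hurwitz-unstable: some eigenvalue has positive real part. An unstable core is a Hurwitz-unstable CS-matrix with no Hurwitz-unstable proper principal submatrix; a $k\times k$ unstable core is an unstable-negative feedback if $\operatorname{sign}\det=(-1)^{k}$. A $P^-_0$ matrix is one whose every nonzero $j\times j$ principal minor has sign $(-1)^j$. *)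

theory Defs
  imports Complex_Main "HOL-Combinatorics.Permutations"
begin

text \<open>Matrices indexed by a finite set K of indices (species): A :: 'm => 'm => real,
  only entries with both indices in K matter.\<close>

definition det_on :: "'m set \<Rightarrow> ('m \<Rightarrow> 'm \<Rightarrow> real) \<Rightarrow> real" where
  "det_on K A = (\<Sum>p | p permutes K. of_int (sign p) * (\<Prod>i\<in>K. A i (p i)))"

definition eigenvalue_on :: "'m set \<Rightarrow> ('m \<Rightarrow> 'm \<Rightarrow> real) \<Rightarrow> complex \<Rightarrow> bool" where
  "eigenvalue_on K A \<mu> \<longleftrightarrow>
     (\<exists>v :: 'm \<Rightarrow> complex. (\<forall>i. i \<notin> K \<longrightarrow> v i = 0) \<and> (\<exists>i\<in>K. v i \<noteq> 0) \<and>
        (\<forall>i\<in>K. (\<Sum>j\<in>K. complex_of_real (A i j) * v j) = \<mu> * v i))"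

definition hurwitz_unstable :: "'m set \<Rightarrow> ('m \<Rightarrow> 'm \<Rightarrow> real) \<Rightarrow> bool" where
  "hurwitz_unstable K A \<longleftrightarrow> (\<exists>\<mu>. eigenvalue_on K A \<mu> \<and> Re \<mu> > 0)"

text \<open>Child-Selection: s j m is the reactant coefficient of species m in reaction j.\<close>
definition is_CS :: "('r \<Rightarrow> 'm \<Rightarrow> real) \<Rightarrow> 'm set \<Rightarrow> 'r set \<Rightarrow> ('m \<Rightarrow> 'r) \<Rightarrow> bool" where
  "is_CS s \<kappa> E J \<longleftrightarrow> finite \<kappa> \<and> bij_betw J \<kappa> E \<and> (\<forall>m\<in>\<kappa>. s (J m) m > 0)"

definition CS_matrix :: "('m \<Rightarrow> 'r \<Rightarrow> real) \<Rightarrow> ('m \<Rightarrow> 'r) \<Rightarrow> 'm \<Rightarrow> 'm \<Rightarrow> real" where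
  "CS_matrix S J = (\<lambda>m l. S m (J l))"

text \<open>Principal submatrices of the K-indexed matrix A are the L-indexed restrictions, L \<subseteq> K.\<close>
definition unstable_core :: "'m set \<Rightarrow> ('m \<Rightarrow> 'm \<Rightarrow> real) \<Rightarrow> bool" where
  "unstable_core K A \<longleftrightarrow> hurwitz_unstable K A \<and> (\<forall>L. L \<subset> K \<longrightarrow> \<not> hurwitz_unstable L A)"

definition unstable_negative_feedback :: "'m set \<Rightarrow> ('m \<Rightarrow> 'm \<Rightarrow> real) \<Rightarrow> bool" where
  "unstable_negative_feedback K A \<longleftrightarrow>
     unstable_core K A \<and> sgn (det_on K A) = (-1) ^ card K"

definition P0_minus :: "'m set \<Rightarrow> ('m \<Rightarrow> 'm \<Rightarrow> real) \<Rightarrow> bool" where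
  "P0_minus K A \<longleftrightarrow>
     (\<forall>L. L \<subseteq> K \<and> L \<noteq> {} \<and> det_on L A \<noteq> 0 \<longrightarrow> sgn (det_on L A) = (-1) ^ card L)"

end

theory Submission
  imports Defs "Jordan_Normal_Form.Determinant"
begin

(* A proper principal submatrix A_L of an unstable core has no eigenvalue with positive real
   part. Along the segment t |-> (1 - t) I - t A_L, t in [0,1], the determinant moves from 1 to
   (-1)^|L| det A_L; were the latter negative, it would vanish at some t in (0,1), making
   (1 - t) / t a positive real eigenvalue of A_L. So every nonzero proper principal minor has
   sign (-1)^|L|, and the full one has it by the negative-feedback hypothesis. *)

lemma det_mat_eq_det_on:
  fixes B :: "'m \<Rightarrow> 'm \<Rightarrow> real"
  assumes f: "bij_betw f {0..<n} L"
  shows "det (mat n n (\<lambda>(i, j). B (f i) (f j))) = det_on L B"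
proof -
  define g where "g = inv_into {0..<n} f"
  have g: "bij_betw g L {0..<n}" "\<And>k. k < n \<Longrightarrow> g (f k) = k" "\<And>x. x \<in> L \<Longrightarrow> f (g x) = x"
    using f by (auto simp: g_def bij_betw_inv_into bij_betw_inv_into_left bij_betw_inv_into_right)
  have inj: "inj_on f {0..<n}" using f by (rule bij_betw_imp_inj_on)
  have "det (mat n n (\<lambda>(i, j). B (f i) (f j))) =
        (\<Sum>p | p permutes {0..<n}. of_int (sign p) * (\<Prod>k = 0..<n. B (f k) (f (p k))))"
    unfolding det_def by (auto intro!: sum.cong prod.cong simp: permutes_in_image)
  also have "\<dots> = (\<Sum>p | p permutes {0..<n}. of_int (sign (map_permutation {0..<n} f p)) *
                     (\<Prod>i\<in>L. B i (map_permutation {0..<n} f p i)))"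
  proof (rule sum.cong[OF refl])
    fix p assume "p \<in> {p. p permutes {0..<n}}"
    then have p: "p permutes {0..<n}" by simp
    have "(\<Prod>i\<in>L. B i (map_permutation {0..<n} f p i)) =
          (\<Prod>k = 0..<n. B (f k) (map_permutation {0..<n} f p (f k)))"
      by (rule prod.reindex_bij_betw[OF f, symmetric])
    also have "\<dots> = (\<Prod>k = 0..<n. B (f k) (f (p k)))"
      using inj by (intro prod.cong) (auto simp: map_permutation_apply)
    finally show "of_int (sign p) * (\<Prod>k = 0..<n. B (f k) (f (p k))) =
        of_int (sign (map_permutation {0..<n} f p)) * (\<Prod>i\<in>L. B i (map_permutation {0..<n} f p i))"
      using sign_map_permutation[OF inj p] by simp
  qed
  also have "\<dots> = det_on L B"
    unfolding det_on_def
    by (rule sum.reindex_bij_witness[where i = "map_permutation L g" and j = "map_permutation {0..<n} f"])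
       (use f g in \<open>auto intro: map_permutation_compose_inv map_permutation_permutes\<close>)
  finally show ?thesis .
qed

lemma det_on_eq_0_imp_null_vector:
  fixes B :: "'m \<Rightarrow> 'm \<Rightarrow> real"
  assumes "finite L" and "det_on L B = 0"
  obtains v where "\<forall>i. i \<notin> L \<longrightarrow> v i = 0" "\<exists>i\<in>L. v i \<noteq> 0" "\<forall>i\<in>L. (\<Sum>j\<in>L. B i j * v j) = 0"
proof -
  define n where "n = card L"
  obtain f where f: "bij_betw f {0..<n} L"
    using ex_bij_betw_nat_finite[OF \<open>finite L\<close>] n_def by blast
  define g where "g = inv_into {0..<n} f"
  have g: "bij_betw g L {0..<n}" "\<And>k. k < n \<Longrightarrow> g (f k) = k" "\<And>x. x \<in> L \<Longrightarrow> f (g x) = x"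
    using f by (auto simp: g_def bij_betw_inv_into bij_betw_inv_into_left bij_betw_inv_into_right)
  have gL: "x \<in> L \<Longrightarrow> g x < n" for x
    using g(1) by (auto simp: bij_betw_def)
  define M where "M = mat n n (\<lambda>(i, j). B (f i) (f j))"
  have M: "M \<in> carrier_mat n n" by (simp add: M_def)
  have "det M = 0"
    using det_mat_eq_det_on[OF f] assms(2) by (simp add: M_def)
  then obtain w where w: "w \<in> carrier_vec n" "w \<noteq> 0\<^sub>v n" "M *\<^sub>v w = 0\<^sub>v n"
    using det_0_iff_vec_prod_zero_field[OF M] by blast
  obtain k where k: "k < n" "w $ k \<noteq> 0"
    using w(1,2) by (metis eq_vecI carrier_vecD index_zero_vec(1,2))
  define v where "v x = (if x \<in> L then w $ g x else 0)" for x
  show ?thesis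
  proof
    show "\<forall>i. i \<notin> L \<longrightarrow> v i = 0" by (simp add: v_def)
    show "\<exists>i\<in>L. v i \<noteq> 0"
      using k f g(2) by (intro bexI[of _ "f k"]) (auto simp: v_def bij_betw_def)
    show "\<forall>i\<in>L. (\<Sum>j\<in>L. B i j * v j) = 0"
    proof
      fix i assume i: "i \<in> L"
      have "(\<Sum>j\<in>L. B i j * v j) = (\<Sum>k = 0..<n. B i (f k) * v (f k))"
        by (rule sum.reindex_bij_betw[OF f, symmetric])
      also have "\<dots> = (M *\<^sub>v w) $ g i"
        using f g i gL[OF i] w(1)
        by (auto simp: M_def v_def scalar_prod_def bij_betw_def intro!: sum.cong)
      also have "\<dots> = 0" using w(3) gL[OF i] by simp
      finally show "(\<Sum>j\<in>L. B i j * v j) = 0" .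
    qed
  qed
qed

lemma det_on_identity:
  assumes "finite L"
  shows "det_on L (\<lambda>i j. if i = j then 1 else 0) = 1"
proof -
  obtain f where f: "bij_betw f {0..<card L} L"
    using ex_bij_betw_nat_finite[OF assms] by blast
  then have "mat (card L) (card L) (\<lambda>(i, j). if f i = f j then 1 else 0) = (1\<^sub>m (card L) :: real mat)"
    by (intro eq_matI) (auto simp: bij_betw_def inj_on_eq_iff)
  then show ?thesis
    using det_mat_eq_det_on[OF f, of "\<lambda>i j. if i = j then 1 else 0"] by simp
qed

lemma det_on_scale:
  "det_on L (\<lambda>i j. c * B i j) = c ^ card L * det_on L B"
  unfolding det_on_def by (simp add: prod.distrib sum_distrib_left mult_ac)

lemma eigenvalue_on_if_det_on_eq_0:
  assumes "finite L" and "det_on L (\<lambda>i j. (if i = j then c else 0) - A i j) = 0"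
  shows "eigenvalue_on L A (complex_of_real c)"
proof -
  obtain v where v: "\<forall>i. i \<notin> L \<longrightarrow> v i = 0" "\<exists>i\<in>L. v i \<noteq> 0"
    "\<forall>i\<in>L. (\<Sum>j\<in>L. ((if i = j then c else 0) - A i j) * v j) = 0"
    using det_on_eq_0_imp_null_vector[OF assms] by blast
  have "(\<Sum>j\<in>L. A i j * v j) = c * v i" if "i \<in> L" for i
  proof -
    have "(\<Sum>j\<in>L. (if i = j then c else 0) * v j) = (\<Sum>j\<in>L. if i = j then c * v j else 0)"
      by (rule sum.cong) auto
    also have "\<dots> = c * v i"
      using that \<open>finite L\<close> by simp
    finally have "(\<Sum>j\<in>L. ((if i = j then c else 0) - A i j) * v j) = c * v i - (\<Sum>j\<in>L. A i j * v j)"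
      by (simp add: left_diff_distrib sum_subtractf)
    then show ?thesis using v(3) that by simp
  qed
  then have "(\<Sum>j\<in>L. complex_of_real (A i j) * complex_of_real (v j)) = complex_of_real c * complex_of_real (v i)"
    if "i \<in> L" for i
    using that by (simp flip: of_real_mult of_real_sum)
  then show ?thesis
    unfolding eigenvalue_on_def using v(1,2) by (intro exI[of _ "\<lambda>i. complex_of_real (v i)"]) auto
qed

lemma positive_eigenvalue_if_det_on_wrong_sign:
  assumes "finite L" and "(-1) ^ card L * det_on L A < 0"
  obtains c where "c > 0" and "eigenvalue_on L A (complex_of_real c)"
proof -
  define M where "M t = (\<lambda>i j. (if i = j then 1 - t else 0) - t * A i j)" for t
  have "continuous_on {0..1} (\<lambda>t. if b then 1 - t else 0 :: real)" for b
    by (cases b) (auto intro: continuous_intros)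
  then have "continuous_on {0..1} (\<lambda>t. det_on L (M t))"
    unfolding det_on_def M_def by (intro continuous_intros)
  moreover have at0: "det_on L (M 0) = 1"
    using det_on_identity[OF \<open>finite L\<close>] by (simp add: M_def cong: if_cong)
  moreover have at1: "det_on L (M 1) < 0"
    using det_on_scale[of L "-1" A] assms(2) by (simp add: M_def cong: if_cong)
  ultimately obtain t where "0 \<le> t" "t \<le> 1" and root: "det_on L (M t) = 0"
    using IVT2'[of "\<lambda>t. det_on L (M t)" 1 0 0] by auto
  then have t: "0 < t" "t < 1"
    using at0 at1 by (auto simp: le_less)
  have "M t = (\<lambda>i j. t * ((if i = j then (1 - t) / t else 0) - A i j))"
    using t by (auto simp: M_def fun_eq_iff field_simps)
  with root have "det_on L (\<lambda>i j. (if i = j then (1 - t) / t else 0) - A i j) = 0"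
    using t by (simp add: det_on_scale)
  then have "eigenvalue_on L A (complex_of_real ((1 - t) / t))"
    by (rule eigenvalue_on_if_det_on_eq_0[OF \<open>finite L\<close>])
  moreover have "(1 - t) / t > 0"
    using t by simp
  ultimately show ?thesis
    using that by blast
qed

lemma det_on_sign_if_not_hurwitz_unstable:
  assumes "finite L" and "\<not> hurwitz_unstable L A"
  shows "0 \<le> (-1) ^ card L * det_on L A"
  using positive_eigenvalue_if_det_on_wrong_sign[OF assms(1)] assms(2)
  unfolding hurwitz_unstable_def by (metis Re_complex_of_real not_le)

lemma sgn_eq_minus_one_power:
  fixes x :: real
  assumes "x \<noteq> 0" and "0 \<le> (-1) ^ n * x"
  shows "sgn x = (-1) ^ n"
  using assms by (cases "even n") (auto simp: sgn_if)

lemma P0_minus_if_unstable_negative_feedback: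
  assumes "finite K" and "unstable_negative_feedback K A"
  shows "P0_minus K A"
  unfolding P0_minus_def
proof (intro allI impI)
  fix L assume L: "L \<subseteq> K \<and> L \<noteq> {} \<and> det_on L A \<noteq> 0"
  show "sgn (det_on L A) = (-1) ^ card L"
  proof (cases "L = K")
    case True
    then show ?thesis
      using assms(2) by (simp add: unstable_negative_feedback_def)
  next
    case False
    with L assms(2) have "\<not> hurwitz_unstable L A"
      by (auto simp: unstable_negative_feedback_def unstable_core_def)
    with L \<open>finite K\<close> show ?thesis
      by (meson det_on_sign_if_not_hurwitz_unstable finite_subset sgn_eq_minus_one_power)
  qed
qed

theorem mainTheorem13:
  fixes s :: "'r \<Rightarrow> 'm \<Rightarrow> real" and S :: "'m \<Rightarrow> 'r \<Rightarrow> real"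
    and \<kappa> :: "'m set" and E :: "'r set" and J :: "'m \<Rightarrow> 'r"
  assumes "is_CS s \<kappa> E J"
    and "unstable_negative_feedback \<kappa> (CS_matrix S J)"
  shows "hurwitz_unstable \<kappa> (CS_matrix S J) \<and> P0_minus \<kappa> (CS_matrix S J)"
proof
  show "hurwitz_unstable \<kappa> (CS_matrix S J)"
    using assms(2) by (simp add: unstable_negative_feedback_def unstable_core_def)
  have "finite \<kappa>"
    using assms(1) by (simp add: is_CS_def)
  then show "P0_minus \<kappa> (CS_matrix S J)"
    using assms(2) by (rule P0_minus_if_unstable_negative_feedback)
qed

end
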